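(* There is a constant $C\ge1$ such that for every positive integer $n$ and all real $x>n_*$, $y>-n_*$, \[ C^{-1}B(x,y)\le q(x,y)\le C\,B(x,y),\qquad B(x,y)=\sqrt{\frac{x-n_*}{n_*+y}}\cdot\Big|\frac1{x-y}\log\frac{x+2n}{y+2n}\Big|, \] where $\frac1{x-y}\log\frac{x+2n}{y+2n}$ is given its continuous value $\frac1{x+2n}$ at $y=x$.
   Context: $n_*=n-\tfrac12$. For real $x>0$, $s<0$, $h^-_x(s)=\dfrac{\sqrt x}{\pi(x-s)\sqrt{-s}}$ (hitting density of the negative half-line for planar Brownian motion from $x$), and for $x<0$, $s>0$, $h^+_x(s)=h^-_{-x}(-s)=\dfrac{\sqrt{-x}}{\pi(s-x)\sqrt{s}}$. For real $x>n_*$, $y>-n_*$, $q(x,y)=\int_{-\infty}^{-n_*}h^-_{x-n_*}(u-n_* )\,h^+_{u+n_*}(y+n_* )\,du$. *)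

theory Defs
  imports "HOL-Analysis.Analysis"
begin

definition nstar :: "nat \<Rightarrow> real" where
  "nstar n = real n - 1/2"

text \<open>Hitting density of the negative half-line from x > 0, evaluated at s < 0.\<close>
definition hminus :: "real \<Rightarrow> real \<Rightarrow> real" where
  "hminus x s = sqrt x / (pi * (x - s) * sqrt (- s))"

text \<open>Hitting density of the positive half-line from x < 0, evaluated at s > 0.\<close>
definition hplus :: "real \<Rightarrow> real \<Rightarrow> real" where
  "hplus x s = sqrt (- x) / (pi * (s - x) * sqrt s)"

definition qker :: "nat \<Rightarrow> real \<Rightarrow> real \<Rightarrow> real" where
  "qker n x y = (LINT u:{..< - nstar n}|lborel.
      hminus (x - nstar n) (u - nstar n) * hplus (u + nstar n) (y + nstar n))"

definition logratio :: "nat \<Rightarrow> real \<Rightarrow> real \<Rightarrow> real" where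
  "logratio n x y = (if y = x then 1 / (x + 2 * real n)
     else ln ((x + 2 * real n) / (y + 2 * real n)) / (x - y))"

definition Bfun :: "nat \<Rightarrow> real \<Rightarrow> real \<Rightarrow> real" where
  "Bfun n x y = sqrt ((x - nstar n) / (nstar n + y)) * \<bar>logratio n x y\<bar>"

end

theory Submission
  imports Defs "HOL-Real_Asymp.Real_Asymp"
begin

(* Substituting u = -N - s in the integral defining q gives
     q(x,y) = sqrt((x - N)/(y + N)) / pi^2 * I,   I = INT_0^oo g(s) ds,
     g(s) = sqrt s / (sqrt (s + 2N) * (A + s) * (b + s)),  A = x + N,  b = y + N.
   On the other hand, for c = N + 1 the elementary integral
     L = INT_c^oo ds / ((A + s) * (b + s))
   is the reciprocal logarithmic mean of A + c = x + 2n and b + c = y + 2n, which is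
   exactly the log-ratio factor of B, so B = sqrt((x - N)/(y + N)) * L.  Hence it
   suffices to show L/2 <= I <= 16 L.  On (c, oo) the factor sqrt (s/(s + 2N)) lies in
   [1/2, 1], so the tail of I is comparable to L; on (0, c] we use
   g(s) <= 1/(max A b * sqrt (2N) * sqrt s), whose integral is at most 3/max A b,
   which is at most 15 L.  The file first computes the two model integrals, then
   bounds the reduced kernel g, performs the substitution, and concludes. *)

definition inv_logmean :: "real \<Rightarrow> real \<Rightarrow> real" where
  "inv_logmean p q = (if p = q then 1 / p else ln (p / q) / (p - q))"

lemma logratio_eq_inv_logmean:
  "logratio n x y = inv_logmean (x + 2 * real n) (y + 2 * real n)"
  by (simp add: logratio_def inv_logmean_def)

(* The logarithmic mean lies below the larger argument, hence below p + q;
   this is the lower bound on L used in both directions. *)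
lemma inv_logmean_ge:
  fixes p q :: real
  assumes p: "p > 0" and q: "q > 0"
  shows "1 / (p + q) \<le> inv_logmean p q"
proof -
  have logmean_le_larger: "1 / u \<le> ln (u / v) / (u - v)" if "v < u" "v > 0" for u v :: real
  proof -
    have "ln (v / u) \<le> v / u - 1" using that by (intro ln_le_minus_one) simp
    then have "(u - v) / u \<le> ln (u / v)" using that by (simp add: ln_div field_simps)
    then show ?thesis using that by (simp add: field_simps)
  qed
  consider "p = q" | "q < p" | "p < q" by linarith
  then have "min (1 / p) (1 / q) \<le> inv_logmean p q"
  proof cases
    case 1 then show ?thesis by (simp add: inv_logmean_def)
  next
    case 2 then show ?thesis using logmean_le_larger[of q p] q by (simp add: inv_logmean_def)
  next
    case 3
    have "ln (p / q) / (p - q) = ln (q / p) / (q - p)"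
      using p q by (simp add: ln_div) (metis minus_diff_eq minus_divide_divide)
    then show ?thesis using logmean_le_larger[of p q] 3 p by (simp add: inv_logmean_def)
  qed
  moreover have "1 / (p + q) \<le> min (1 / p) (1 / q)"
    using p q by (simp add: frac_le)
  ultimately show ?thesis by linarith
qed

(* The tail integral of 1/((P+t)(Q+t)) over (d, oo) is the reciprocal logarithmic mean
   of P + d and Q + d (a primitive is ln((Q+t)/(P+t))/(P-Q), or -1/(P+t) if P = Q). *)
lemma ray_integral_inv_logmean:
  fixes P Q d :: real
  assumes P: "P + d > 0" and Q: "Q + d > 0"
  shows "set_integrable lborel {d<..} (\<lambda>t. 1 / ((P + t) * (Q + t)))"
    and "(LINT t:{d<..}|lborel. 1 / ((P + t) * (Q + t))) = inv_logmean (P + d) (Q + d)"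
proof -
  define F where "F = (if P = Q then (\<lambda>t::real. - 1 / (P + t))
     else (\<lambda>t. (ln (Q + t) - ln (P + t)) / (P - Q)))"
  have deriv: "DERIV F t :> 1 / ((P + t) * (Q + t))" if "d < t" for t
  proof -
    have pos: "P + t > 0" "Q + t > 0" using that P Q by auto
    show ?thesis
    proof (cases "P = Q")
      case True
      then show ?thesis unfolding F_def using pos
        by (auto intro!: derivative_eq_intros simp: power2_eq_square field_simps)
    next
      case False
      have "DERIV F t :> (1 / (Q + t) - 1 / (P + t)) / (P - Q)"
        unfolding F_def using pos False by (auto intro!: derivative_eq_intros)
      moreover have "1 / (Q + t) - 1 / (P + t) = (P - Q) / ((P + t) * (Q + t))"
        using pos by (simp add: field_simps)
      ultimately show ?thesis using False by simp
    qed
  qed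
  have cont: "isCont (\<lambda>t. 1 / ((P + t) * (Q + t))) t" if "d < t" for t
    using that P Q by (auto intro!: continuous_intros)
  have "isCont F d"
    unfolding F_def using P Q by (auto intro!: continuous_intros)
  then have lim_lower: "((F \<circ> real_of_ereal) \<longlongrightarrow> F d) (at_right (ereal d))"
    unfolding ereal_tendsto_simps by (simp add: isCont_def filterlim_at_split)
  have lim_upper: "((F \<circ> real_of_ereal) \<longlongrightarrow> 0) (at_left \<infinity>)"
    unfolding ereal_tendsto_simps F_def by (cases "P = Q") (simp_all, real_asymp+)
  have nonneg: "AE t in lborel. ereal d < ereal t \<longrightarrow> ereal t < \<infinity> \<longrightarrow> 0 \<le> 1 / ((P + t) * (Q + t))"
    using P Q by (intro AE_I2) auto
  note FTC = interval_integral_FTC_nonneg[where a = "ereal d" and b = \<infinity>,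
      OF _ deriv cont nonneg lim_lower lim_upper]
  show "set_integrable lborel {d<..} (\<lambda>t. 1 / ((P + t) * (Q + t)))"
    using FTC(1) by simp
  have "(LINT t:{d<..}|lborel. 1 / ((P + t) * (Q + t))) = - F d"
    using FTC(2) by (simp add: interval_integral_to_infinity_eq)
  also have "\<dots> = inv_logmean (P + d) (Q + d)"
    unfolding F_def inv_logmean_def using P Q by (auto simp: ln_div field_simps)
  finally show "(LINT t:{d<..}|lborel. 1 / ((P + t) * (Q + t))) = inv_logmean (P + d) (Q + d)" .
qed

lemma integral_inv_sqrt:
  fixes c :: real
  assumes c: "c > 0"
  shows "set_integrable lborel {0<..c} (\<lambda>t. 1 / sqrt t)"
    and "(LINT t:{0<..c}|lborel. 1 / sqrt t) = 2 * sqrt c"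
proof -
  define F where "F t = 2 * sqrt t" for t :: real
  have deriv: "DERIV F t :> 1 / sqrt t" if "ereal 0 < ereal t" for t
    using that unfolding F_def by (auto intro!: derivative_eq_intros simp: field_simps)
  have cont: "isCont (\<lambda>t. 1 / sqrt t) t" if "ereal 0 < ereal t" for t
    using that by (auto intro!: continuous_intros)
  have nonneg: "AE t in lborel. ereal 0 < ereal t \<longrightarrow> ereal t < ereal c \<longrightarrow> 0 \<le> 1 / sqrt t"
    by (intro AE_I2) auto
  have "isCont F a" for a unfolding F_def by (intro continuous_intros)
  then have lim_lower: "((F \<circ> real_of_ereal) \<longlongrightarrow> F 0) (at_right (ereal 0))"
    and lim_upper: "((F \<circ> real_of_ereal) \<longlongrightarrow> F c) (at_left (ereal c))"
    unfolding ereal_tendsto_simps by (simp_all add: isCont_def filterlim_at_split)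
  note FTC = interval_integral_FTC_nonneg[where a = "ereal 0" and b = "ereal c",
      OF _ deriv cont nonneg lim_lower lim_upper]
  have open_closed: "set_integrable lborel {0<..<c} f = set_integrable lborel {0<..c} f"
    "(LINT t:{0<..<c}|lborel. f t) = (LINT t:{0<..c}|lborel. f t)" for f :: "real \<Rightarrow> real"
    by (rule set_integrable_discrete_difference[where X = "{c}"] set_integral_discrete_difference[where X = "{c}"]; force)+
  show "set_integrable lborel {0<..c} (\<lambda>t. 1 / sqrt t)"
    using FTC(1) c open_closed(1) by simp
  show "(LINT t:{0<..c}|lborel. 1 / sqrt t) = 2 * sqrt c"
    using FTC(2) c open_closed(2) by (simp add: interval_lebesgue_integral_le_eq F_def)
qed

(* The integrand of q after the substitution u = -N - s, up to the constant factor. *)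
definition reduced_kernel :: "real \<Rightarrow> real \<Rightarrow> real \<Rightarrow> real \<Rightarrow> real" where
  "reduced_kernel m A b t = sqrt t / (sqrt (t + m) * ((A + t) * (b + t)))"

lemma reduced_kernel_nonneg:
  "0 < t \<Longrightarrow> 0 \<le> m \<Longrightarrow> 0 < A \<Longrightarrow> 0 < b \<Longrightarrow> 0 \<le> reduced_kernel m A b t"
  by (simp add: reduced_kernel_def)

(* Near 0 the kernel behaves like s^(-1/2): (A+s)(b+s) >= max A b * s and s + m >= m. *)
lemma reduced_kernel_le_head:
  fixes m A b t :: real
  assumes "0 < t" "0 < m" "0 < A" "0 < b"
  shows "reduced_kernel m A b t \<le> 1 / (max A b * sqrt m * sqrt t)"
proof -
  have "A * t \<le> (A + t) * (b + t)" "b * t \<le> (b + t) * (A + t)"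
    using assms by (intro mult_mono; simp)+
  then have prod: "max A b * t \<le> (A + t) * (b + t)"
    by (simp add: max_def mult.commute)
  have root: "sqrt m \<le> sqrt (t + m)" using assms by simp
  have denom: "sqrt m * (max A b * t) \<le> sqrt (t + m) * ((A + t) * (b + t))"
    using mult_mono[OF root prod] assms by simp
  have "reduced_kernel m A b t \<le> sqrt t / (sqrt m * (max A b * (sqrt t * sqrt t)))"
    unfolding reduced_kernel_def using denom assms by (intro frac_le) auto
  also have "\<dots> = 1 / (max A b * sqrt m * sqrt t)"
    using assms by (simp add: field_simps)
  finally show ?thesis .
qed

lemma reduced_kernel_le_tail:
  fixes m A b t :: real
  assumes "0 < t" "0 \<le> m" "0 < A" "0 < b"
  shows "reduced_kernel m A b t \<le> 1 / ((A + t) * (b + t))"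
proof -
  have "sqrt t / sqrt (t + m) \<le> 1" using assms by simp
  then have "sqrt t / sqrt (t + m) * (1 / ((A + t) * (b + t))) \<le> 1 / ((A + t) * (b + t))"
    using assms by (intro mult_left_le_one_le) auto
  then show ?thesis by (simp add: reduced_kernel_def)
qed

lemma reduced_kernel_ge_tail:
  fixes m A b t :: real
  assumes "0 < t" "0 \<le> m" "0 < A" "0 < b" "m \<le> 3 * t"
  shows "1 / (2 * ((A + t) * (b + t))) \<le> reduced_kernel m A b t"
proof -
  have "sqrt (t + m) \<le> sqrt (4 * t)" using assms by simp
  also have "\<dots> = 2 * sqrt t" by (simp add: real_sqrt_mult)
  finally have root: "sqrt (t + m) \<le> 2 * sqrt t" .
  have "1 / (2 * ((A + t) * (b + t))) = sqrt t / (2 * sqrt t * ((A + t) * (b + t)))"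
    using assms by simp
  also have "\<dots> \<le> reduced_kernel m A b t"
    unfolding reduced_kernel_def using root assms
    by (intro divide_left_mono mult_right_mono) (auto intro!: mult_pos_pos)
  finally show ?thesis .
qed

lemma reduced_kernel_integral_bounds:
  fixes m_pos A_pos b_pos c_pos :: real
  assumes m_pos: "0 < m" and A_pos: "0 < A" and b_pos: "0 < b" and c_pos: "0 < c"
    and m_le: "m \<le> 3 * c" and c_le_m: "4 * c \<le> 9 * m" and c_le_A: "2 * c \<le> 3 * A"
  defines "L \<equiv> inv_logmean (A + c) (b + c)"
    and "I \<equiv> LINT t:{0<..}|lborel. reduced_kernel m A b t"
  shows "L / 2 \<le> I" and "I \<le> 16 * L"
proof -
  define M where "M = max A b"
  define h where "h t = 1 / ((A + t) * (b + t))" for t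
  have M_pos: "M > 0" using A_pos by (simp add: M_def)
  have L_ge: "1 / (A + b + 2 * c) \<le> L"
    using inv_logmean_ge[of "A + c" "b + c"] A_pos b_pos c_pos by (simp add: L_def add_ac)
  have tail_int: "set_integrable lborel {c<..} h"
    and tail_val: "(LINT t:{c<..}|lborel. h t) = L"
    using ray_integral_inv_logmean[of A c b] A_pos b_pos c_pos by (simp_all add: h_def[abs_def] L_def)
  have head_int: "set_integrable lborel {0<..c} (\<lambda>t. 1 / (M * sqrt m) * (1 / sqrt t))"
    and head_val: "(LINT t:{0<..c}|lborel. 1 / (M * sqrt m) * (1 / sqrt t)) = 2 * sqrt c / (M * sqrt m)"
     apply (rule set_integrable_mult_right[OF integral_inv_sqrt(1)[OF c_pos]])
    by (simp only: set_integral_mult_right integral_inv_sqrt(2)[OF c_pos]) simp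
  have meas: "set_borel_measurable lborel S (reduced_kernel m A b)" if "S \<in> sets lborel" for S
    using that unfolding set_borel_measurable_def reduced_kernel_def by measurable
  have g_head: "set_integrable lborel {0<..c} (reduced_kernel m A b)"
  proof (rule set_integrable_bound[OF head_int meas])
    show "AE t in lborel. t \<in> {0<..c} \<longrightarrow>
        norm (reduced_kernel m A b t) \<le> norm (1 / (M * sqrt m) * (1 / sqrt t))"
      using reduced_kernel_le_head[of _ m A b] reduced_kernel_nonneg[of _ m A b] m_pos A_pos b_pos M_pos
      by (intro AE_I2) (auto simp: M_def)
  qed simp
  have g_tail: "set_integrable lborel {c<..} (reduced_kernel m A b)"
  proof (rule set_integrable_bound[OF tail_int meas])
    show "AE t in lborel. t \<in> {c<..} \<longrightarrow> norm (reduced_kernel m A b t) \<le> norm (h t)"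
      using reduced_kernel_le_tail[of _ m A b] reduced_kernel_nonneg[of _ m A b] m_pos A_pos b_pos c_pos
      by (intro AE_I2) (auto simp: h_def)
  qed simp
  have split: "I = (LINT t:{0<..c}|lborel. reduced_kernel m A b t) + (LINT t:{c<..}|lborel. reduced_kernel m A b t)"
  proof -
    have "{0<..} = {0<..c} \<union> {c<..}" using c_pos by auto
    moreover have "{0<..c} \<inter> {c<..} = {}" by auto
    ultimately show ?thesis
      unfolding I_def using set_integral_Un[OF _ g_head g_tail] by simp
  qed
  have "(LINT t:{0<..c}|lborel. reduced_kernel m A b t) \<le> 2 * sqrt c / (M * sqrt m)"
    unfolding head_val[symmetric] using g_head head_int
    by (rule set_integral_mono) (use reduced_kernel_le_head[of _ m A b] m_pos A_pos b_pos in \<open>auto simp: M_def\<close>)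
  also have "\<dots> \<le> 3 / M"
  proof -
    have "sqrt (4 * c) \<le> sqrt (9 * m)" using c_le_m by simp
    then have "2 * sqrt c \<le> 3 * sqrt m" by (simp add: real_sqrt_mult)
    then show ?thesis using m_pos M_pos by (simp add: field_simps)
  qed
  also have "\<dots> \<le> 15 / (A + b + 2 * c)"
    using A_pos b_pos c_pos c_le_A M_pos by (simp add: field_simps M_def)
  also have "\<dots> \<le> 15 * L" using L_ge by simp
  finally have head_le: "(LINT t:{0<..c}|lborel. reduced_kernel m A b t) \<le> 15 * L" .
  have tail_le: "(LINT t:{c<..}|lborel. reduced_kernel m A b t) \<le> L"
    unfolding tail_val[symmetric] using g_tail tail_int
    by (rule set_integral_mono) (use reduced_kernel_le_tail[of _ m A b] m_pos A_pos b_pos c_pos in \<open>auto simp: h_def\<close>)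
  show "I \<le> 16 * L" using split head_le tail_le by simp
  have head_ge: "0 \<le> (LINT t:{0<..c}|lborel. reduced_kernel m A b t)"
    unfolding set_lebesgue_integral_def using reduced_kernel_nonneg[of _ m A b] m_pos A_pos b_pos
    by (intro Bochner_Integration.integral_nonneg) (simp add: indicator_def)
  have "L / 2 = (LINT t:{c<..}|lborel. h t / 2)"
    using tail_val by simp
  also have "\<dots> \<le> (LINT t:{c<..}|lborel. reduced_kernel m A b t)"
    using tail_int g_tail
    by (rule set_integral_mono[OF set_integrable_divide])
      (use reduced_kernel_ge_tail[of _ m A b] m_pos A_pos b_pos c_pos m_le in \<open>auto simp: h_def mult.commute\<close>)
  finally show "L / 2 \<le> I" using split head_ge by simp
qed

lemma qker_integrand_reflected:
  fixes N x y s :: real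
  shows "hminus (x - N) ((- N - s) - N) * hplus ((- N - s) + N) (y + N)
    = sqrt (x - N) / (pi\<^sup>2 * sqrt (y + N)) * reduced_kernel (2 * N) (x + N) (y + N) s"
proof -
  have "hminus (x - N) ((- N - s) - N) = sqrt (x - N) / (pi * (x + N + s) * sqrt (s + 2 * N))"
    by (simp add: hminus_def algebra_simps)
  moreover have "hplus ((- N - s) + N) (y + N) = sqrt s / (pi * (y + N + s) * sqrt (y + N))"
    by (simp add: hplus_def algebra_simps)
  ultimately show ?thesis
    by (simp add: reduced_kernel_def power2_eq_square algebra_simps)
qed

lemma qker_reduction:
  fixes n :: nat and x y :: real
  defines "N \<equiv> nstar n"
  shows "qker n x y = sqrt (x - N) / (pi\<^sup>2 * sqrt (y + N))
    * (LINT s:{0<..}|lborel. reduced_kernel (2 * N) (x + N) (y + N) s)"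
proof -
  define f where "f u = hminus (x - N) (u - N) * hplus (u + N) (y + N)" for u
  define K where "K = sqrt (x - N) / (pi\<^sup>2 * sqrt (y + N))"
  have reflect: "indicator {..< - N} (- N + -1 * s) * f (- N + -1 * s)
      = K * (indicator {0<..} s * reduced_kernel (2 * N) (x + N) (y + N) s)" for s
    using qker_integrand_reflected[of x N s y]
    by (simp add: f_def K_def N_def indicator_def)
  have "qker n x y = (\<integral>u. indicator {..< - N} u * f u \<partial>lborel)"
    unfolding qker_def set_lebesgue_integral_def f_def N_def by simp
  also have "\<dots> = \<bar>-1\<bar> *\<^sub>R (\<integral>s. indicator {..< - N} (- N + -1 * s) * f (- N + -1 * s) \<partial>lborel)"
    by (rule lborel_integral_real_affine) simp
  also have "\<dots> = K * (LINT s:{0<..}|lborel. reduced_kernel (2 * N) (x + N) (y + N) s)"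
    unfolding reflect set_lebesgue_integral_def by simp
  finally show ?thesis unfolding K_def .
qed

lemma pi_squared_bounds: "1 \<le> pi\<^sup>2" "pi\<^sup>2 \<le> 10"
proof -
  have pi: "3 \<le> pi" "pi \<le> 3.15" using pi_approx by auto
  show "1 \<le> pi\<^sup>2" using pi by (intro one_le_power) simp
  have "pi * pi \<le> 3.15 * 3.15" using mult_mono[OF pi(2) pi(2)] pi by simp
  then show "pi\<^sup>2 \<le> 10" by (simp add: power2_eq_square)
qed

lemma qker_comparable:
  fixes n :: nat and x y :: real
  assumes n: "n \<ge> 1" and x: "x > nstar n" and y: "y > - nstar n"
  shows "Bfun n x y / 20 \<le> qker n x y" and "qker n x y \<le> 20 * Bfun n x y"
proof -
  define N where "N = nstar n"
  define L where "L = inv_logmean (x + 2 * real n) (y + 2 * real n)"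
  define I where "I = (LINT s:{0<..}|lborel. reduced_kernel (2 * N) (x + N) (y + N) s)"
  define S where "S = sqrt ((x - N) / (y + N))"
  have N: "N \<ge> 1/2" using n by (simp add: N_def nstar_def)
  have xN: "x > N" and yN: "y + N > 0" using x y by (simp_all add: N_def)
  have shift: "x + N + (N + 1) = x + 2 * real n" "y + N + (N + 1) = y + 2 * real n"
    by (simp_all add: N_def nstar_def)
  have I_bounds: "L / 2 \<le> I" "I \<le> 16 * L"
    using reduced_kernel_integral_bounds[of "2 * N" "x + N" "y + N" "N + 1"] N xN yN
    by (simp_all add: L_def I_def shift)
  have pos: "0 < x + 2 * real n" "0 < y + 2 * real n"
    using shift xN yN N by linarith+
  have "0 < 1 / ((x + 2 * real n) + (y + 2 * real n))" using pos by simp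
  then have L_pos: "L > 0"
    using inv_logmean_ge[OF pos] unfolding L_def by linarith
  have S_pos: "S > 0" using xN yN by (simp add: S_def)
  have q_eq: "qker n x y = S / pi\<^sup>2 * I"
    using qker_reduction[of n x y] by (simp add: S_def I_def N_def real_sqrt_divide)
  have B_eq: "Bfun n x y = S * L"
    using L_pos by (simp add: Bfun_def logratio_eq_inv_logmean S_def L_def N_def add.commute)
  have "qker n x y \<le> S / pi\<^sup>2 * (16 * L)"
    unfolding q_eq using I_bounds S_pos by (intro mult_left_mono) auto
  also have "\<dots> \<le> 20 * (S * L)"
    using pi_squared_bounds S_pos L_pos by (simp add: field_simps)
  finally show "qker n x y \<le> 20 * Bfun n x y" unfolding B_eq .
  have "Bfun n x y / 20 \<le> S / pi\<^sup>2 * (L / 2)"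
    unfolding B_eq using pi_squared_bounds S_pos L_pos by (simp add: field_simps)
  also have "\<dots> \<le> qker n x y"
    unfolding q_eq using I_bounds S_pos by (intro mult_left_mono) auto
  finally show "Bfun n x y / 20 \<le> qker n x y" .
qed

theorem mainTheorem12:
  shows "\<exists>C::real. C \<ge> 1 \<and>
    (\<forall>n::nat. n \<ge> 1 \<longrightarrow> (\<forall>x y::real. x > nstar n \<longrightarrow> y > - nstar n \<longrightarrow>
       Bfun n x y / C \<le> qker n x y \<and> qker n x y \<le> C * Bfun n x y))"
  using qker_comparable by (intro exI[of _ 20]) auto

end
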